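(* Let $f^\pm\in C(B_1^\pm)$, $g\in C(T)$, let $0<\rho<1$, and let $u$ be a bounded viscosity subsolution of the flat problem (F). For $\varepsilon>0$ set $r_\varepsilon=(2\varepsilon\|u\|_{L^\infty(B_1)})^{1/2}$. Then for all sufficiently small $\varepsilon>0$ and every $0<r\le\rho-r_\varepsilon$, the upper $\varepsilon$-envelope $u^\varepsilon$ is a viscosity subsolution of $$\omega(x)F^\pm(D^2u^\varepsilon)=f^\pm_\varepsilon\ \text{ in }B_r^\pm,\qquad (u^\varepsilon)^+_{x_d}-(u^\varepsilon)^-_{x_d}=g_\varepsilon\ \text{ on }T_r=B_r\cap\{x_d=0\},$$ where $f^\pm_\varepsilon=f^\pm-\gamma_{f^\pm}(r_\varepsilon)$ and $g_\varepsilon=g-\gamma_g(r_\varepsilon)$.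
   Context: Flat setting: $x=(x',x_d)$, $B_r^\pm=B_r\cap\{\pm x_d>0\}$, $T=B_1\cap\{x_d=0\}$, $a\in(0,1)$ constant, $\omega(x)=|x_d|^a$; $F^\pm:S(d)\to\mathbb R$ satisfy $\lambda|N|\le F^\pm(M+N)-F^\pm(M)\le\Lambda|N|$ for all symmetric $M$ and $N\ge0$. Flat problem (F): $\omega F^\pm(D^2u)=f^\pm$ in $B_1^\pm$, $u^+_{x_d}-u^-_{x_d}=g$ on $T$. Viscosity subsolution of (F) (and analogously of the problem on $B_r$): $u\in USC$ such that for any $\varphi$ touching $u$ from above at $x_0$: if $x_0\in B^\pm$ and $\varphi$ is $C^2$ near $x_0$ then $\omega(x_0)F^\pm(D^2\varphi(x_0))\ge f^\pm(x_0)$; if $x_0$ lies on $\{x_d=0\}$ and $\varphi\in C^1(\overline{B^+_\delta(x_0)})\cap C^1(\overline{B^-_\delta(x_0)})$ then $\varphi^+_{x_d}(x_0)-\varphi^-_{x_d}(x_0)\ge g(x_0)$, with $\varphi^\pm=\varphi|_{B_\delta(x_0)\cap\{\pm x_d>0\}}$. Modulus of continuity: $\gamma_h(t)=\sup_{|x-y|\le t}|h(x)-h(y)|$. Upper $\varepsilon$-envelope in the $x'$-direction: for $y=(y',y_d)\in\overline{B_\rho}$, $u^\varepsilon(y)=\sup\{u(x',y_d)-\frac1\varepsilon|x'-y'|^2: (x',y_d)\in\overline{B_\rho}\}$. *)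

theory Defs
  imports "HOL-Analysis.Analysis"
begin

text \<open>Points of R^d are vectors x :: real^'d; a distinguished index k :: 'd plays the
role of the last coordinate x_d, the remaining coordinates form x'.\<close>

definition sym_mat :: "real^'d^'d \<Rightarrow> bool" where
  "sym_mat M \<longleftrightarrow> transpose M = M"

definition psd_mat :: "real^'d^'d \<Rightarrow> bool" where
  "psd_mat N \<longleftrightarrow> (\<forall>v. 0 \<le> v \<bullet> (N *v v))"

definition mat_norm :: "real^'d^'d \<Rightarrow> real" where
  "mat_norm N = onorm (\<lambda>v. N *v v)"

definition uniformly_elliptic :: "real \<Rightarrow> real \<Rightarrow> (real^'d^'d \<Rightarrow> real) \<Rightarrow> bool" where
  "uniformly_elliptic lam Lam F \<longleftrightarrow>
     (\<forall>M N. sym_mat M \<longrightarrow> sym_mat N \<longrightarrow> psd_mat N \<longrightarrow>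
        lam * mat_norm N \<le> F (M + N) - F M \<and> F (M + N) - F M \<le> Lam * mat_norm N)"

definition usc_on :: "('a::metric_space) set \<Rightarrow> ('a \<Rightarrow> real) \<Rightarrow> bool" where
  "usc_on S u \<longleftrightarrow> (\<forall>x\<in>S. \<forall>e>0. \<exists>d>0. \<forall>y\<in>S. dist y x < d \<longrightarrow> u y < u x + e)"

definition upper_half :: "'d \<Rightarrow> (real^'d) set \<Rightarrow> (real^'d) set" where
  "upper_half k S = S \<inter> {x. x $ k > 0}"

definition lower_half :: "'d \<Rightarrow> (real^'d) set \<Rightarrow> (real^'d) set" where
  "lower_half k S = S \<inter> {x. x $ k < 0}"

definition flat_part :: "'d \<Rightarrow> (real^'d) set \<Rightarrow> (real^'d) set" where
  "flat_part k S = S \<inter> {x. x $ k = 0}"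

definition wt :: "real \<Rightarrow> 'd \<Rightarrow> real^'d \<Rightarrow> real" where
  "wt a k x = \<bar>x $ k\<bar> powr a"

definition touches_above :: "(real^'d) set \<Rightarrow> (real^'d \<Rightarrow> real) \<Rightarrow> (real^'d \<Rightarrow> real) \<Rightarrow> real^'d \<Rightarrow> bool" where
  "touches_above S phi u x0 \<longleftrightarrow> phi x0 = u x0 \<and>
     (\<exists>r>0. \<forall>x\<in>S \<inter> ball x0 r. u x \<le> phi x)"

definition C2_with :: "(real^'d \<Rightarrow> real) \<Rightarrow> real^'d \<Rightarrow> real \<Rightarrow> (real^'d \<Rightarrow> real^'d)
                        \<Rightarrow> (real^'d \<Rightarrow> real^'d^'d) \<Rightarrow> bool" where
  "C2_with phi x0 e G H \<longleftrightarrow> 0 < e \<and>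
     (\<forall>x\<in>ball x0 e. (phi has_derivative (\<lambda>h. G x \<bullet> h)) (at x) \<and>
                     (G has_derivative (\<lambda>h. H x *v h)) (at x)) \<and>
     continuous_on (ball x0 e) H"

text \<open>phi restricted to the half ball A (open) is C^1 up to the boundary, i.e. belongs to
C^1(closure A): phi is continuous on closure A, differentiable in A with gradient G, and G
extends continuously to closure A.  Then G x0 is the one-sided gradient at x0.\<close>
definition C1_closure_with :: "(real^'d \<Rightarrow> real) \<Rightarrow> (real^'d) set \<Rightarrow> (real^'d \<Rightarrow> real^'d) \<Rightarrow> bool" where
  "C1_closure_with phi A G \<longleftrightarrow>
     continuous_on (closure A) phi \<and> continuous_on (closure A) G \<and>
     (\<forall>x\<in>A. (phi has_derivative (\<lambda>h. G x \<bullet> h)) (at x))"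

text \<open>Right-hand sides are extended-real valued so that
f - gamma_f(t) makes sense when the modulus of continuity is infinite.\<close>
definition visc_sub ::
  "real \<Rightarrow> 'd \<Rightarrow> real \<Rightarrow> (real^'d^'d \<Rightarrow> real) \<Rightarrow> (real^'d^'d \<Rightarrow> real)
   \<Rightarrow> (real^'d \<Rightarrow> ereal) \<Rightarrow> (real^'d \<Rightarrow> ereal) \<Rightarrow> (real^'d \<Rightarrow> ereal) \<Rightarrow> (real^'d \<Rightarrow> real) \<Rightarrow> bool" where
  "visc_sub r k a Fp Fm fp fm g u \<longleftrightarrow>
     usc_on (ball 0 r) u \<and>
     (\<forall>phi x0 e G H. x0 \<in> upper_half k (ball 0 r) \<longrightarrow> touches_above (ball 0 r) phi u x0 \<longrightarrow>
         C2_with phi x0 e G H \<longrightarrow> ereal (wt a k x0 * Fp (H x0)) \<ge> fp x0) \<and>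
     (\<forall>phi x0 e G H. x0 \<in> lower_half k (ball 0 r) \<longrightarrow> touches_above (ball 0 r) phi u x0 \<longrightarrow>
         C2_with phi x0 e G H \<longrightarrow> ereal (wt a k x0 * Fm (H x0)) \<ge> fm x0) \<and>
     (\<forall>phi x0 d Gp Gm. x0 \<in> flat_part k (ball 0 r) \<longrightarrow> touches_above (ball 0 r) phi u x0 \<longrightarrow>
         0 < d \<longrightarrow> C1_closure_with phi (upper_half k (ball x0 d)) Gp \<longrightarrow>
         C1_closure_with phi (lower_half k (ball x0 d)) Gm \<longrightarrow>
         ereal (Gp x0 $ k - Gm x0 $ k) \<ge> g x0)"

definition modcont :: "(real^'d) set \<Rightarrow> (real^'d \<Rightarrow> real) \<Rightarrow> real \<Rightarrow> ereal" where
  "modcont S h t = (SUP p \<in> {(x, y). x \<in> S \<and> y \<in> S \<and> dist x y \<le> t}. ereal \<bar>h (fst p) - h (snd p)\<bar>)"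

definition envelope :: "'d \<Rightarrow> real \<Rightarrow> real \<Rightarrow> (real^'d \<Rightarrow> real) \<Rightarrow> real^'d \<Rightarrow> real" where
  "envelope k rho eps u y =
     Sup {u x - (norm (x - y))\<^sup>2 / eps | x. x \<in> cball 0 rho \<and> x $ k = y $ k}"

definition supnorm :: "(real^'d \<Rightarrow> real) \<Rightarrow> real" where
  "supnorm u = (SUP x \<in> ball 0 1. \<bar>u x\<bar>)"

end

theory Submission
  imports Defs
begin

text \<open>The penalty of the envelope acts only in the horizontal directions x', and the weight
  |x_d|^a, the half balls and the interface are all invariant under horizontal translations.
  If phi touches u^eps from above at x0 and the supremum defining u^eps(x0) is attained at xs,
  then z \<mapsto> phi(z + x0 - xs) + |x0 - xs|^2/eps touches u from above at xs, with the same
  Hessian and the same one-sided normal derivatives. Comparing u^eps(x0) \<ge> u(x0) with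
  |u| \<le> ||u|| gives |x0 - xs| \<le> r_eps, so reading the inequalities for u at xs instead of x0
  costs at most the moduli of continuity of the data at scale r_eps.\<close>

lemma usc_on_subset: "usc_on T u \<Longrightarrow> S \<subseteq> T \<Longrightarrow> usc_on S u"
  unfolding usc_on_def by (meson subsetD)

lemma usc_on_tendsto_le:
  fixes u :: "'a::metric_space \<Rightarrow> real"
  assumes "usc_on S u" "\<And>n. x n \<in> S" "x \<longlonglongrightarrow> l" "l \<in> S" "a \<longlonglongrightarrow> c" "\<And>n. a n \<le> u (x n)"
  shows "c \<le> u l"
proof (rule ccontr)
  assume "\<not> c \<le> u l"
  define e where "e = (c - u l) / 2"
  have e: "e > 0" using \<open>\<not> c \<le> u l\<close> by (simp add: e_def)
  obtain d where d: "d > 0" "\<And>y. y \<in> S \<Longrightarrow> dist y l < d \<Longrightarrow> u y < u l + e"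
    using assms(1,4) e unfolding usc_on_def by blast
  have "eventually (\<lambda>n. dist (x n) l < d) sequentially"
    using assms(3) d(1) by (rule tendstoD)
  moreover have "eventually (\<lambda>n. a n > c - e) sequentially"
    using assms(5) e by (intro order_tendstoD(1)) auto
  ultimately obtain n where "dist (x n) l < d" "a n > c - e"
    using eventually_happens'[OF sequentially_bot] eventually_conj by blast
  then have "u (x n) < u l + e" "u (x n) > c - e" using d assms(2,6)[of n] by force+
  then show False by (simp add: e_def field_simps)
qed

lemma usc_on_diff_continuous:
  fixes u c :: "'a::metric_space \<Rightarrow> real"
  assumes "usc_on S u" "continuous_on S c"
  shows "usc_on S (\<lambda>x. u x - c x)"
  unfolding usc_on_def
proof (intro ballI allI impI)
  fix x e assume x: "x \<in> S" and e: "(0::real) < e"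
  obtain d1 where d1: "d1 > 0" "\<forall>y\<in>S. dist y x < d1 \<longrightarrow> u y < u x + e / 2"
    using assms(1) x e unfolding usc_on_def by (meson half_gt_zero)
  obtain d2 where d2: "d2 > 0" "\<forall>y\<in>S. dist y x < d2 \<longrightarrow> dist (c y) (c x) < e / 2"
    using assms(2) x e unfolding continuous_on_iff by (meson half_gt_zero)
  show "\<exists>d>0. \<forall>y\<in>S. dist y x < d \<longrightarrow> u y - c y < u x - c x + e"
  proof (intro exI[of _ "min d1 d2"] conjI ballI impI)
    fix y assume "y \<in> S" "dist y x < min d1 d2"
    then have "u y < u x + e / 2" "\<bar>c y - c x\<bar> < e / 2"
      using d1 d2 by (auto simp: dist_real_def)
    then show "u y - c y < u x - c x + e" by linarith
  qed (use d1 d2 in auto)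
qed

lemma usc_on_attains_sup:
  fixes f :: "'a::metric_space \<Rightarrow> real"
  assumes usc: "usc_on S f" and K: "compact K" "K \<subseteq> S" "K \<noteq> {}" and bdd: "bdd_above (f ` K)"
  shows "\<exists>x\<in>K. \<forall>y\<in>K. f y \<le> f x"
proof -
  define M where "M = Sup (f ` K)"
  have "\<exists>x\<in>K. M - inverse (real (Suc n)) < f x" for n
  proof -
    have "M - inverse (real (Suc n)) < M" by simp
    then obtain t where "t \<in> f ` K" "M - inverse (real (Suc n)) < t"
      using less_cSupE[of _ "f ` K"] K(3) unfolding M_def by blast
    then show ?thesis by blast
  qed
  then obtain x where x: "\<And>n. x n \<in> K" "\<And>n. M - inverse (real (Suc n)) < f (x n)"
    by metis
  obtain l r where l: "l \<in> K" "strict_mono r" "(x \<circ> r) \<longlonglongrightarrow> l"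
    using seq_compactE[OF compact_imp_seq_compact[OF K(1)], of x] x(1) by blast
  have "(\<lambda>n. inverse (real (Suc (r n)))) \<longlonglongrightarrow> 0"
    using LIMSEQ_subseq_LIMSEQ[OF LIMSEQ_inverse_real_of_nat l(2)] by (simp add: o_def)
  then have "(\<lambda>n. M - inverse (real (Suc (r n)))) \<longlonglongrightarrow> M - 0"
    by (intro tendsto_diff tendsto_const)
  moreover have "M - inverse (real (Suc (r n))) \<le> f ((x \<circ> r) n)" for n
    using x(2)[of "r n"] by simp
  ultimately have "M \<le> f l"
    using usc_on_tendsto_le[OF usc _ l(3)] x(1) K(2) l(1) by (simp add: subset_iff)
  moreover have "f y \<le> M" if "y \<in> K" for y
    unfolding M_def using bdd that by (simp add: cSUP_upper)
  ultimately show ?thesis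
    using l(1) by force
qed

lemma ereal_minus_modcont_le:
  assumes "x \<in> S" "y \<in> S" "dist x y \<le> t"
  shows "ereal (h x) - modcont S h t \<le> ereal (h y)"
proof -
  have "ereal \<bar>h x - h y\<bar> \<le> modcont S h t"
    unfolding modcont_def using assms
    by (intro SUP_upper2[where i="(x, y)"]) auto
  then show ?thesis
    by (cases "modcont S h t") auto
qed

lemma has_derivative_translate_add_const:
  assumes "(f has_derivative f') (at (c + z))"
  shows "((\<lambda>z. f (c + z) + K) has_derivative f') (at z)"
proof -
  have "((\<lambda>z. c + z) has_derivative (\<lambda>h. h)) (at z)"
    by (intro derivative_eq_intros) auto
  from has_derivative_compose[OF this assms] show ?thesis
    by (rule has_derivative_add_const)
qed

lemma C2_with_translate_add_const:
  assumes "C2_with phi x0 e G H"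
  shows "C2_with (\<lambda>z. phi (c + z) + K) (x0 - c) e (\<lambda>z. G (c + z)) (\<lambda>z. H (c + z))"
  unfolding C2_with_def
proof (intro conjI ballI)
  show "0 < e" using assms by (simp add: C2_with_def)
  fix z assume "z \<in> ball (x0 - c) e"
  then have z: "c + z \<in> ball x0 e" by (simp add: dist_norm algebra_simps)
  show "((\<lambda>z. phi (c + z) + K) has_derivative (\<lambda>h. G (c + z) \<bullet> h)) (at z)"
    using assms z unfolding C2_with_def by (intro has_derivative_translate_add_const) blast
  have "(G has_derivative (\<lambda>h. H (c + z) *v h)) (at (c + z))"
    using assms z unfolding C2_with_def by blast
  from has_derivative_translate_add_const[where K=0, OF this]
  show "((\<lambda>z. G (c + z)) has_derivative (\<lambda>h. H (c + z) *v h)) (at z)"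
    by simp
next
  have "continuous_on (ball x0 e) H" using assms by (simp add: C2_with_def)
  moreover have "continuous_on (ball (x0 - c) e) (\<lambda>z. c + z)"
    by (intro continuous_intros)
  moreover have "(\<lambda>z. c + z) ` ball (x0 - c) e \<subseteq> ball x0 e"
    by (auto simp: dist_norm algebra_simps)
  ultimately show "continuous_on (ball (x0 - c) e) (\<lambda>z. H (c + z))"
    by (rule continuous_on_compose2)
qed

lemma C1_closure_with_translate_add_const:
  assumes "C1_closure_with phi ((+) c ` A) G"
  shows "C1_closure_with (\<lambda>z. phi (c + z) + K) A (\<lambda>z. G (c + z))"
  unfolding C1_closure_with_def
proof (intro conjI ballI)
  have cl: "(\<lambda>z. c + z) ` closure A \<subseteq> closure ((+) c ` A)"
    by (simp add: closure_translation)
  have ct: "continuous_on (closure A) (\<lambda>z. c + z)" by (intro continuous_intros)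
  have "continuous_on (closure A) (\<lambda>z. phi (c + z))"
    using continuous_on_compose2[OF _ ct cl] assms unfolding C1_closure_with_def by blast
  then show "continuous_on (closure A) (\<lambda>z. phi (c + z) + K)" by (intro continuous_intros)
  show "continuous_on (closure A) (\<lambda>z. G (c + z))"
    using continuous_on_compose2[OF _ ct cl] assms unfolding C1_closure_with_def by blast
  fix z assume "z \<in> A"
  then show "((\<lambda>z. phi (c + z) + K) has_derivative (\<lambda>h. G (c + z) \<bullet> h)) (at z)"
    using assms unfolding C1_closure_with_def by (intro has_derivative_translate_add_const) blast
qed

lemma
  fixes c :: "real^'d"
  assumes "c $ k = 0"
  shows upper_half_translation: "upper_half k ((+) c ` S) = (+) c ` upper_half k S"
    and lower_half_translation: "lower_half k ((+) c ` S) = (+) c ` lower_half k S"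
  using assms by (auto simp: upper_half_def lower_half_def)

locale envelope_setting =
  fixes u :: "real^'d \<Rightarrow> real" and k :: 'd and rho eps S :: real
  assumes usc: "usc_on (ball 0 1) u" and rho_lt_1: "rho < 1"
    and bounded: "\<forall>x\<in>ball 0 1. \<bar>u x\<bar> \<le> S" and eps_pos: "0 < eps"
begin

abbreviation E :: "real^'d \<Rightarrow> real" where
  "E \<equiv> envelope k rho eps u"

abbreviation r_eps :: real where
  "r_eps \<equiv> sqrt (2 * eps * S)"

lemma cball_subset_ball: "cball 0 rho \<subseteq> ball 0 1"
  using rho_lt_1 by auto

lemma bounded_on_cball: "x \<in> cball 0 rho \<Longrightarrow> \<bar>u x\<bar> \<le> S"
  using bounded rho_lt_1 by simp

lemma r_eps_nonneg: "0 \<le> r_eps"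
  using bounded[rule_format, of 0] eps_pos by simp

lemma envelope_ge:
  assumes "z \<in> cball 0 rho" "z $ k = y $ k"
  shows "u z - (norm (z - y))\<^sup>2 / eps \<le> E y"
  unfolding envelope_def
proof (rule cSup_upper)
  show "u z - (norm (z - y))\<^sup>2 / eps \<in> {u x - (norm (x - y))\<^sup>2 / eps |x. x \<in> cball 0 rho \<and> x $ k = y $ k}"
    using assms by blast
  have "u x - (norm (x - y))\<^sup>2 / eps \<le> S" if "x \<in> cball 0 rho" for x
  proof -
    have "0 \<le> (norm (x - y))\<^sup>2 / eps" using eps_pos by simp
    with bounded_on_cball[OF that] show ?thesis by linarith
  qed
  then show "bdd_above {u x - (norm (x - y))\<^sup>2 / eps |x. x \<in> cball 0 rho \<and> x $ k = y $ k}"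
    by (intro bdd_aboveI[of _ S]) blast
qed

lemma envelope_attained:
  assumes y: "y \<in> cball 0 rho"
  shows "\<exists>x\<in>cball 0 rho. x $ k = y $ k \<and> E y = u x - (norm (x - y))\<^sup>2 / eps"
proof -
  define K where "K = cball 0 rho \<inter> {x. x $ k = y $ k}"
  define h where "h x = u x - (norm (x - y))\<^sup>2 / eps" for x
  have "usc_on (ball 0 1) h"
    unfolding h_def using eps_pos by (intro usc_on_diff_continuous usc continuous_intros) auto
  moreover have "compact K"
    unfolding K_def by (intro compact_Int_closed compact_cball closed_Collect_eq continuous_intros)
  moreover have "K \<subseteq> ball 0 1" "K \<noteq> {}"
    using cball_subset_ball y by (auto simp: K_def)
  moreover have h_le: "\<And>x. x \<in> K \<Longrightarrow> h x \<le> E y"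
    unfolding K_def h_def using envelope_ge by blast
  then have "bdd_above (h ` K)" by (intro bdd_aboveI[of _ "E y"]) blast
  ultimately obtain x where x: "x \<in> K" "\<And>z. z \<in> K \<Longrightarrow> h z \<le> h x"
    using usc_on_attains_sup by metis
  have "E y \<le> h x"
    unfolding envelope_def using y x(2) by (intro cSup_least) (auto simp: K_def h_def)
  with h_le[OF x(1)] x(1) show ?thesis
    unfolding K_def h_def by auto
qed

lemma usc_on_envelope: "usc_on (cball 0 rho) E"
  unfolding usc_on_def
proof (intro ballI allI impI)
  fix y :: "real^'d" and e :: real
  assume y: "y \<in> cball 0 rho" and e: "e > 0"
  show "\<exists>d>0. \<forall>y'\<in>cball 0 rho. dist y' y < d \<longrightarrow> E y' < E y + e"
  proof (rule ccontr)
    assume "\<not> ?thesis"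
    then have "\<forall>d>0. \<exists>y'\<in>cball 0 rho. dist y' y < d \<and> E y + e \<le> E y'"
      by (meson not_le)
    then have "\<exists>y'\<in>cball 0 rho. norm (y' - y) < 1 / real (Suc n) \<and> E y + e \<le> E y'" for n
      by (auto simp: dist_norm)
    then obtain yn where yn: "\<And>n. yn n \<in> cball 0 rho" "\<And>n. norm (yn n - y) < 1 / real (Suc n)"
      "\<And>n. E y + e \<le> E (yn n)" by metis
    obtain xn where xn: "\<And>n. xn n \<in> cball 0 rho" "\<And>n. xn n $ k = yn n $ k"
      "\<And>n. E (yn n) = u (xn n) - (norm (xn n - yn n))\<^sup>2 / eps"
      using envelope_attained[OF yn(1)] by metis
    obtain l r where l: "l \<in> cball 0 rho" "strict_mono r" "(xn \<circ> r) \<longlonglongrightarrow> l"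
      using seq_compactE[OF compact_imp_seq_compact[OF compact_cball]] xn(1) by metis
    have "yn \<longlonglongrightarrow> y"
      using LIMSEQ_norm_0[OF yn(2)] by (simp add: Lim_null[of yn])
    then have ylim: "(yn \<circ> r) \<longlonglongrightarrow> y"
      by (rule LIMSEQ_subseq_LIMSEQ[OF _ l(2)])
    have "(\<lambda>n. (xn \<circ> r) n $ k) \<longlonglongrightarrow> l $ k" "(\<lambda>n. (yn \<circ> r) n $ k) \<longlonglongrightarrow> y $ k"
      using tendsto_vec_nth[OF l(3)] tendsto_vec_nth[OF ylim] by (simp_all add: o_def)
    then have lk: "l $ k = y $ k"
      using xn(2) by (auto intro: LIMSEQ_unique)
    have lim: "(\<lambda>n. E y + e + (norm ((xn \<circ> r) n - (yn \<circ> r) n))\<^sup>2 / eps)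
        \<longlonglongrightarrow> E y + e + (norm (l - y))\<^sup>2 / eps"
      by (intro tendsto_intros l(3) ylim) (use eps_pos in auto)
    have "E y + e + (norm (l - y))\<^sup>2 / eps \<le> u l"
    proof (rule usc_on_tendsto_le[OF usc _ l(3) _ lim])
      show "(xn \<circ> r) n \<in> ball 0 1" for n
        using xn(1)[of "r n"] rho_lt_1 by simp
      show "l \<in> ball 0 1"
        using l(1) rho_lt_1 by simp
      show "E y + e + (norm ((xn \<circ> r) n - (yn \<circ> r) n))\<^sup>2 / eps \<le> u ((xn \<circ> r) n)" for n
        using yn(3)[of "r n"] xn(3)[of "r n"] by simp
    qed
    moreover have "u l - (norm (l - y))\<^sup>2 / eps \<le> E y"
      by (rule envelope_ge[OF l(1) lk])
    ultimately show False using e by linarith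
  qed
qed

lemma envelope_attained_near:
  assumes x0: "x0 \<in> cball 0 rho"
  obtains xs where "xs \<in> cball 0 rho" "xs $ k = x0 $ k"
    "E x0 = u xs - (norm (xs - x0))\<^sup>2 / eps" "norm (xs - x0) \<le> r_eps"
proof -
  obtain xs where xs: "xs \<in> cball 0 rho" "xs $ k = x0 $ k" "E x0 = u xs - (norm (xs - x0))\<^sup>2 / eps"
    using envelope_attained[OF x0] by blast
  have "u x0 \<le> E x0"
    using envelope_ge[OF x0 refl] by simp
  moreover have "\<bar>u xs\<bar> \<le> S" "\<bar>u x0\<bar> \<le> S"
    using bounded_on_cball xs(1) x0 by auto
  ultimately have "(norm (xs - x0))\<^sup>2 / eps \<le> 2 * S"
    using xs(3) by linarith
  then have "(norm (xs - x0))\<^sup>2 \<le> 2 * eps * S"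
    using eps_pos by (simp add: field_simps)
  then show thesis
    using that xs real_le_rsqrt by blast
qed

text \<open>The envelope at x0 - xs + z dominates u z minus the fixed penalty |x0 - xs|^2/eps, with
  equality at z = xs.\<close>
lemma touches_above_translate:
  assumes x0: "x0 \<in> ball 0 r" and t: "touches_above (ball 0 r) phi E x0"
    and xs: "norm xs < rho" "xs $ k = x0 $ k" "E x0 = u xs - (norm (xs - x0))\<^sup>2 / eps"
  shows "touches_above (ball 0 1) (\<lambda>z. phi (x0 - xs + z) + (norm (x0 - xs))\<^sup>2 / eps) u xs"
proof -
  define c where "c = x0 - xs"
  obtain rt where rt: "rt > 0" "\<And>y. y \<in> ball 0 r \<inter> ball x0 rt \<Longrightarrow> E y \<le> phi y" "phi x0 = E x0"
    using t unfolding touches_above_def by blast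
  define r' where "r' = min rt (min (rho - norm xs) (r - norm x0))"
  have r'0: "r' > 0" using rt(1) xs(1) x0 by (simp add: r'_def)
  have "u z \<le> phi (c + z) + (norm c)\<^sup>2 / eps" if z: "z \<in> ball xs r'" for z
  proof -
    have "norm (z - xs) < r'" using z by (simp add: dist_norm norm_minus_commute)
    then have dz: "norm (z - xs) < rt" "norm (z - xs) < rho - norm xs" "norm (z - xs) < r - norm x0"
      by (simp_all add: r'_def)
    have cz: "c + z = x0 + (z - xs)" by (simp add: c_def)
    have "norm (c + z) < r"
      unfolding cz using dz(3) norm_triangle_ineq[of x0 "z - xs"] by linarith
    moreover have "dist x0 (c + z) < rt"
      unfolding cz using dz(1) by (simp add: dist_norm norm_minus_commute)
    ultimately have E_le_phi: "E (c + z) \<le> phi (c + z)"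
      using rt(2) by simp
    have "z \<in> cball 0 rho"
      using dz(2) norm_triangle_ineq[of xs "z - xs"] by simp
    moreover have "z $ k = (c + z) $ k"
      using xs(2) by (simp add: c_def)
    ultimately have "u z - (norm (z - (c + z)))\<^sup>2 / eps \<le> E (c + z)"
      by (rule envelope_ge)
    with E_le_phi show ?thesis
      by (simp add: norm_minus_commute)
  qed
  moreover have "phi (c + xs) + (norm c)\<^sup>2 / eps = u xs"
    using rt(3) xs(3) by (simp add: c_def norm_minus_commute)
  ultimately show ?thesis
    unfolding touches_above_def c_def using r'0 by auto
qed

lemma envelope_touching_point:
  assumes r: "r \<le> rho - r_eps"
    and x0: "x0 \<in> ball 0 r" and t: "touches_above (ball 0 r) phi E x0"
  obtains xs where "norm xs < rho" "xs $ k = x0 $ k" "dist x0 xs \<le> r_eps"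
    "touches_above (ball 0 1) (\<lambda>z. phi (x0 - xs + z) + (norm (x0 - xs))\<^sup>2 / eps) u xs"
proof -
  have "x0 \<in> cball 0 rho"
    using x0 r r_eps_nonneg unfolding mem_ball mem_cball dist_0_norm by linarith
  then obtain xs where xs: "xs \<in> cball 0 rho" "xs $ k = x0 $ k"
    "E x0 = u xs - (norm (xs - x0))\<^sup>2 / eps" "norm (xs - x0) \<le> r_eps"
    by (rule envelope_attained_near)
  have "norm xs < rho"
    using x0 r xs(4) norm_triangle_ineq[of x0 "xs - x0"] by simp
  moreover have "dist x0 xs \<le> r_eps"
    using xs(4) by (simp add: dist_norm norm_minus_commute)
  moreover have "norm (xs - x0) = norm (x0 - xs)"
    by (rule norm_minus_commute)
  ultimately show thesis
    using that xs(2) touches_above_translate[OF x0 t _ xs(2,3)] by simp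
qed

lemma ball_subset_unit_ball:
  assumes "r \<le> rho - r_eps"
  shows "ball 0 r \<subseteq> ball 0 1"
  using assms rho_lt_1 r_eps_nonneg by (intro subset_ball) linarith

lemma usc_on_envelope_ball:
  assumes "r \<le> rho - r_eps"
  shows "usc_on (ball 0 r) E"
proof -
  have "ball 0 r \<subseteq> ball 0 rho" using assms r_eps_nonneg by (intro subset_ball) linarith
  then show ?thesis
    by (intro usc_on_subset[OF usc_on_envelope]) auto
qed

lemma envelope_interior_inequality:
  assumes sub: "\<And>phi x e G H. x \<in> ball 0 1 \<inter> A \<Longrightarrow> touches_above (ball 0 1) phi u x \<Longrightarrow>
      C2_with phi x e G H \<Longrightarrow> f x \<le> wt a k x * F (H x)"
    and A: "\<And>x y. x $ k = y $ k \<Longrightarrow> x \<in> A \<Longrightarrow> y \<in> A"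
    and r: "r \<le> rho - r_eps"
    and x0: "x0 \<in> ball 0 r \<inter> A" and t: "touches_above (ball 0 r) phi E x0"
    and C: "C2_with phi x0 e G H"
  shows "ereal (f x0) - modcont (ball 0 1 \<inter> A) f r_eps \<le> ereal (wt a k x0 * F (H x0))"
proof -
  obtain xs where xs: "norm xs < rho" "xs $ k = x0 $ k" "dist x0 xs \<le> r_eps"
    "touches_above (ball 0 1) (\<lambda>z. phi (x0 - xs + z) + (norm (x0 - xs))\<^sup>2 / eps) u xs"
    using envelope_touching_point[OF r _ t] x0 by blast
  have "x0 \<in> ball 0 1"
    using x0 ball_subset_unit_ball[OF r] by blast
  then have in_domain: "xs \<in> ball 0 1 \<inter> A" "x0 \<in> ball 0 1 \<inter> A"
    using xs(1,2) x0 rho_lt_1 A[of x0 xs] by auto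
  have "C2_with (\<lambda>z. phi (x0 - xs + z) + (norm (x0 - xs))\<^sup>2 / eps) xs e
      (\<lambda>z. G (x0 - xs + z)) (\<lambda>z. H (x0 - xs + z))"
    using C2_with_translate_add_const[OF C, of "x0 - xs"] by simp
  from sub[OF in_domain(1) xs(4) this] have "f xs \<le> wt a k x0 * F (H x0)"
    using xs(2) by (simp add: wt_def)
  moreover have "ereal (f x0) - modcont (ball 0 1 \<inter> A) f r_eps \<le> ereal (f xs)"
    by (rule ereal_minus_modcont_le[OF in_domain(2,1) xs(3)])
  ultimately show ?thesis
    by (meson ereal_less_eq(3) order_trans)
qed

lemma envelope_flat_inequality:
  assumes sub: "\<And>phi x d Gp Gm. x \<in> flat_part k (ball 0 1) \<Longrightarrow> touches_above (ball 0 1) phi u x \<Longrightarrow>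
      0 < d \<Longrightarrow> C1_closure_with phi (upper_half k (ball x d)) Gp \<Longrightarrow>
      C1_closure_with phi (lower_half k (ball x d)) Gm \<Longrightarrow> g x \<le> Gp x $ k - Gm x $ k"
    and r: "r \<le> rho - r_eps"
    and x0: "x0 \<in> flat_part k (ball 0 r)" and t: "touches_above (ball 0 r) phi E x0"
    and d: "0 < d" and Cp: "C1_closure_with phi (upper_half k (ball x0 d)) Gp"
    and Cm: "C1_closure_with phi (lower_half k (ball x0 d)) Gm"
  shows "ereal (g x0) - modcont (flat_part k (ball 0 1)) g r_eps
    \<le> ereal (Gp x0 $ k - Gm x0 $ k)"
proof -
  obtain xs where xs: "norm xs < rho" "xs $ k = x0 $ k" "dist x0 xs \<le> r_eps"
    "touches_above (ball 0 1) (\<lambda>z. phi (x0 - xs + z) + (norm (x0 - xs))\<^sup>2 / eps) u xs"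
    using envelope_touching_point[OF r _ t] x0 unfolding flat_part_def by blast
  define c where "c = x0 - xs"
  have ck: "c $ k = 0" and x0_eq: "x0 = c + xs"
    using xs(2) by (simp_all add: c_def)
  have "ball x0 d = (+) c ` ball xs d"
    unfolding x0_eq by (rule ball_translation)
  then have halves: "upper_half k (ball x0 d) = (+) c ` upper_half k (ball xs d)"
      "lower_half k (ball x0 d) = (+) c ` lower_half k (ball xs d)"
    by (simp_all only: upper_half_translation[OF ck] lower_half_translation[OF ck])
  have "x0 \<in> ball 0 1"
    using x0 ball_subset_unit_ball[OF r] unfolding flat_part_def by blast
  then have in_domain: "xs \<in> flat_part k (ball 0 1)" "x0 \<in> flat_part k (ball 0 1)"
    using xs(1,2) x0 rho_lt_1 by (auto simp: flat_part_def)
  have "g xs \<le> Gp (c + xs) $ k - Gm (c + xs) $ k"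
    using sub[OF in_domain(1) xs(4)[folded c_def] d
        C1_closure_with_translate_add_const[OF Cp[unfolded halves(1)]]
        C1_closure_with_translate_add_const[OF Cm[unfolded halves(2)]]] .
  moreover have "ereal (g x0) - modcont (flat_part k (ball 0 1)) g r_eps \<le> ereal (g xs)"
    by (rule ereal_minus_modcont_le[OF in_domain(2,1) xs(3)])
  ultimately show ?thesis
    unfolding x0_eq[symmetric] by (meson ereal_less_eq(3) order_trans)
qed

lemma visc_sub_envelope:
  assumes usub: "visc_sub 1 k a Fp Fm (\<lambda>x. ereal (fp x)) (\<lambda>x. ereal (fm x)) (\<lambda>x. ereal (g x)) u"
    and r: "r \<le> rho - r_eps"
  shows "visc_sub r k a Fp Fm
      (\<lambda>x. ereal (fp x) - modcont (upper_half k (ball 0 1)) fp r_eps)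
      (\<lambda>x. ereal (fm x) - modcont (lower_half k (ball 0 1)) fm r_eps)
      (\<lambda>x. ereal (g x) - modcont (flat_part k (ball 0 1)) g r_eps) E"
proof -
  have upper: "\<And>phi x e G H. x \<in> ball 0 1 \<inter> {x. 0 < x $ k} \<Longrightarrow> touches_above (ball 0 1) phi u x \<Longrightarrow>
      C2_with phi x e G H \<Longrightarrow> fp x \<le> wt a k x * Fp (H x)"
    using usub unfolding visc_sub_def upper_half_def ereal_less_eq(3) by blast
  have lower: "\<And>phi x e G H. x \<in> ball 0 1 \<inter> {x. x $ k < 0} \<Longrightarrow> touches_above (ball 0 1) phi u x \<Longrightarrow>
      C2_with phi x e G H \<Longrightarrow> fm x \<le> wt a k x * Fm (H x)"
    using usub unfolding visc_sub_def lower_half_def ereal_less_eq(3) by blast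
  have flat: "\<And>phi x d Gp Gm. x \<in> flat_part k (ball 0 1) \<Longrightarrow> touches_above (ball 0 1) phi u x \<Longrightarrow>
      0 < d \<Longrightarrow> C1_closure_with phi (upper_half k (ball x d)) Gp \<Longrightarrow>
      C1_closure_with phi (lower_half k (ball x d)) Gm \<Longrightarrow> g x \<le> Gp x $ k - Gm x $ k"
    using usub unfolding visc_sub_def ereal_less_eq(3) by blast
  show ?thesis
    unfolding visc_sub_def
  proof (intro conjI allI impI)
    show "usc_on (ball 0 r) E"
      using r by (rule usc_on_envelope_ball)
  next
    fix phi x0 e G H
    assume "x0 \<in> upper_half k (ball 0 r)" "touches_above (ball 0 r) phi E x0" "C2_with phi x0 e G H"
    then show "ereal (fp x0) - modcont (upper_half k (ball 0 1)) fp r_eps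
        \<le> ereal (wt a k x0 * Fp (H x0))"
      unfolding upper_half_def
      by (intro envelope_interior_inequality[where A="{x. 0 < x $ k}"] upper) (use r in auto)
  next
    fix phi x0 e G H
    assume "x0 \<in> lower_half k (ball 0 r)" "touches_above (ball 0 r) phi E x0" "C2_with phi x0 e G H"
    then show "ereal (fm x0) - modcont (lower_half k (ball 0 1)) fm r_eps
        \<le> ereal (wt a k x0 * Fm (H x0))"
      unfolding lower_half_def
      by (intro envelope_interior_inequality[where A="{x. x $ k < 0}"] lower) (use r in auto)
  next
    fix phi x0 d Gp Gm
    assume "x0 \<in> flat_part k (ball 0 r)" "touches_above (ball 0 r) phi E x0" "0 < d"
      "C1_closure_with phi (upper_half k (ball x0 d)) Gp" "C1_closure_with phi (lower_half k (ball x0 d)) Gm"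
    then show "ereal (g x0) - modcont (flat_part k (ball 0 1)) g r_eps
        \<le> ereal (Gp x0 $ k - Gm x0 $ k)"
      by (intro envelope_flat_inequality[where g=g] flat) (use r in auto)
  qed
qed

end

lemma abs_le_supnorm:
  assumes "\<exists>M. \<forall>x\<in>ball 0 1. \<bar>u x\<bar> \<le> M" "x \<in> ball 0 1"
  shows "\<bar>u x\<bar> \<le> supnorm u"
proof -
  obtain M where "\<forall>x\<in>ball 0 1. \<bar>u x\<bar> \<le> M" using assms(1) by blast
  then have "bdd_above ((\<lambda>x. \<bar>u x\<bar>) ` ball 0 1)" by (intro bdd_aboveI2) blast
  then show ?thesis
    unfolding supnorm_def using assms(2) by (rule cSUP_upper2) simp
qed

theorem mainTheorem9:
  fixes k :: "'d::finite" and a lam Lam rho :: real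
    and Fp Fm :: "real^'d^'d \<Rightarrow> real"
    and fp fm g u :: "real^'d \<Rightarrow> real"
  assumes a: "0 < a" "a < 1"
    and ell: "0 < lam" "lam \<le> Lam" "uniformly_elliptic lam Lam Fp" "uniformly_elliptic lam Lam Fm"
    and fpc: "continuous_on (upper_half k (ball 0 1)) fp"
    and fmc: "continuous_on (lower_half k (ball 0 1)) fm"
    and gc: "continuous_on (flat_part k (ball 0 1)) g"
    and rho: "0 < rho" "rho < 1"
    and ubd: "\<exists>M. \<forall>x\<in>ball 0 1. \<bar>u x\<bar> \<le> M"
    and usub: "visc_sub 1 k a Fp Fm (\<lambda>x. ereal (fp x)) (\<lambda>x. ereal (fm x)) (\<lambda>x. ereal (g x)) u"
  shows "\<exists>eps0>0. \<forall>eps. 0 < eps \<and> eps < eps0 \<longrightarrow>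
           (let re = sqrt (2 * eps * supnorm u) in
            \<forall>r. 0 < r \<and> r \<le> rho - re \<longrightarrow>
              visc_sub r k a Fp Fm
                (\<lambda>x. ereal (fp x) - modcont (upper_half k (ball 0 1)) fp re)
                (\<lambda>x. ereal (fm x) - modcont (lower_half k (ball 0 1)) fm re)
                (\<lambda>x. ereal (g x) - modcont (flat_part k (ball 0 1)) g re)
                (envelope k rho eps u))"
proof -
  have "usc_on (ball 0 1) u"
    using usub by (simp add: visc_sub_def)
  moreover have "\<forall>x\<in>ball 0 1. \<bar>u x\<bar> \<le> supnorm u"
    using abs_le_supnorm[OF ubd] by blast
  ultimately have "envelope_setting u rho eps (supnorm u)" if "0 < eps" for eps
    using rho(2) that by unfold_locales
  then show ?thesis
    unfolding Let_def using envelope_setting.visc_sub_envelope[OF _ usub]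
    by (intro exI[of _ 1]) simp
qed

end
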